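(* There is an absolute constant $K$ such that the following holds. Let $X$ be a real symmetric matrix with $\rho(X)<1$, let $p\in[-1,1]$ and $\epsilon>0$. Then there exists a real polynomial $T$ of degree $t\le K\max(1,\log(1/\epsilon))$ such that $$(I-X)^p\approx_\epsilon T\!\left(I+\tfrac12X\right)\left(I-\tfrac12X-\tfrac12X^2\right)^{p}T\!\left(I+\tfrac12X\right).$$
   Context: $\rho(X)$ is the spectral radius. For symmetric $A,B$, $A\approx_\epsilon B$ means $e^{\epsilon}A\succeq B\succeq e^{-\epsilon}A$ in the Loewner order. For symmetric positive definite $M=\sum_i\lambda_iu_iu_i^\top$, $M^p=\sum_i\lambda_i^pu_iu_i^\top$. A polynomial applied to a symmetric matrix is evaluated in the usual way. *)

theory Defs
  imports "Jordan_Normal_Form.Spectral_Radius"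
begin

definition poly_mat :: "real poly \<Rightarrow> real mat \<Rightarrow> real mat" where
  "poly_mat T M = (let n = dim_row M in
     foldr (\<lambda>c A. c \<cdot>\<^sub>m 1\<^sub>m n + M * A) (coeffs T) (0\<^sub>m n n))"

definition mat_powr :: "real mat \<Rightarrow> real \<Rightarrow> real mat" where
  "mat_powr M p = (let n = dim_row M in
     (SOME R. \<exists>U lam. U \<in> carrier_mat n n \<and> transpose_mat U * U = 1\<^sub>m n \<and>
        M = U * mat_diag n lam * transpose_mat U \<and>
        R = U * mat_diag n (\<lambda>i. lam i powr p) * transpose_mat U))"

definition loewner_ge :: "real mat \<Rightarrow> real mat \<Rightarrow> bool" where
  "loewner_ge A B = (\<forall>v \<in> carrier_vec (dim_row A). v \<bullet> ((A - B) *\<^sub>v v) \<ge> 0)"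

definition loewner_approx :: "real \<Rightarrow> real mat \<Rightarrow> real mat \<Rightarrow> bool" where
  "loewner_approx eps A B = (loewner_ge (exp eps \<cdot>\<^sub>m A) B \<and> loewner_ge B (exp (- eps) \<cdot>\<^sub>m A))"

end

theory Submission
  imports Defs "Jordan_Normal_Form.Schur_Decomposition" "HOL-Analysis.Generalised_Binomial_Theorem"
begin

text \<open>Diagonalize \<open>X = U diag(\<lambda>) U\<^sup>T\<close> with \<open>U\<close> orthogonal; the spectral radius bound gives
  \<open>|\<lambda>\<^sub>i| < 1\<close>. Every matrix in the statement is a function of \<open>X\<close>, so the claim reduces to the scalar
  inequalities \<open>e\<^sup>-\<^sup>\<epsilon> (1 - \<lambda>)\<^sup>p \<le> T(y)\<^sup>2 (1 - \<lambda>/2 - \<lambda>\<^sup>2/2)\<^sup>p \<le> e\<^sup>\<epsilon> (1 - \<lambda>)\<^sup>p\<close> with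
  \<open>y = 1 + \<lambda>/2 \<in> (1/2, 3/2)\<close>. As \<open>1 - \<lambda>/2 - \<lambda>\<^sup>2/2 = (1 - \<lambda>) y\<close>, it suffices that
  \<open>T(y)\<^sup>2 y\<^sup>p \<approx> 1\<close>, i.e. \<open>T \<approx> y\<^sup>-\<^sup>p\<^sup>/\<^sup>2\<close>. Take for \<open>T\<close> the binomial series of
  \<open>(1 + (y - 1))\<^sup>-\<^sup>p\<^sup>/\<^sup>2\<close> truncated after \<open>N = O(log(1/\<epsilon>))\<close> terms: the binomial coefficients
  are bounded by 1 and \<open>|y - 1| \<le> 1/2\<close>, so the tail is at most \<open>2 \<cdot> 2\<^sup>-\<^sup>N\<close>.\<close>

definition orthonormal_mat :: "nat \<Rightarrow> real mat \<Rightarrow> bool" where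
  "orthonormal_mat n U \<longleftrightarrow> U \<in> carrier_mat n n \<and> transpose_mat U * U = 1\<^sub>m n"

lemma orthonormal_matD:
  assumes "orthonormal_mat n U"
  shows orthonormal_mat_carrier: "U \<in> carrier_mat n n"
    and orthonormal_mat_transpose_carrier: "transpose_mat U \<in> carrier_mat n n"
    and orthonormal_mat_left_inverse: "transpose_mat U * U = 1\<^sub>m n"
    and orthonormal_mat_right_inverse: "U * transpose_mat U = 1\<^sub>m n"
  using assms mat_mult_left_right_inverse[of "transpose_mat U" n U]
  unfolding orthonormal_mat_def by auto

lemma orthonormal_mat_col_inner:
  assumes "orthonormal_mat n U" "i < n" "j < n"
  shows "col U i \<bullet> col U j = (if i = j then 1 else 0)"
proof -
  have "col U i \<bullet> col U j = (transpose_mat U * U) $$ (i, j)"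
    using orthonormal_mat_carrier[OF assms(1)] assms(2,3) by simp
  then show ?thesis using assms by (simp add: orthonormal_mat_left_inverse)
qed

lemma orthonormal_mat_col_nonzero:
  assumes "orthonormal_mat n U" "i < n"
  shows "col U i \<noteq> 0\<^sub>v n"
  using orthonormal_mat_col_inner[OF assms assms(2)] by auto

lemma orthonormal_mat_mult:
  assumes U: "orthonormal_mat n U" and V: "orthonormal_mat n V"
  shows "orthonormal_mat n (U * V)"
proof -
  note carr = orthonormal_matD[OF U] orthonormal_matD[OF V]
  have "transpose_mat (U * V) * (U * V) = transpose_mat V * (transpose_mat U * (U * V))"
    using carr by (simp add: transpose_mult assoc_mult_mat[of _ n n _ n _ n])
  also have "transpose_mat U * (U * V) = (transpose_mat U * U) * V"
    using carr by (metis assoc_mult_mat)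
  also have "transpose_mat V * (\<dots>) = 1\<^sub>m n" using carr by simp
  finally show ?thesis using carr unfolding orthonormal_mat_def by auto
qed

lemma orthonormal_mat_of_cols:
  fixes us :: "real Matrix.vec list"
  assumes us: "set us \<subseteq> carrier_vec n" "length us = n"
    and inner: "\<And>i j. i < n \<Longrightarrow> j < n \<Longrightarrow> us ! i \<bullet> us ! j = (if i = j then 1 else 0)"
  shows "orthonormal_mat n (mat_of_cols n us)"
  unfolding orthonormal_mat_def
proof
  let ?W = "mat_of_cols n us"
  show W: "?W \<in> carrier_mat n n" using us by auto
  show "transpose_mat ?W * ?W = 1\<^sub>m n"
  proof (rule eq_matI)
    fix i j assume "i < dim_row (1\<^sub>m n)" "j < dim_col (1\<^sub>m n)"
    then have i: "i < n" and j: "j < n" by auto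
    have "us ! i \<in> carrier_vec n" "us ! j \<in> carrier_vec n" using us i j by auto
    then have "(transpose_mat ?W * ?W) $$ (i, j) = us ! i \<bullet> us ! j"
      using W us(2) i j by (simp add: col_mat_of_cols)
    then show "(transpose_mat ?W * ?W) $$ (i, j) = 1\<^sub>m n $$ (i, j)" using inner i j by simp
  qed (use W in auto)
qed

text \<open>Gram--Schmidt applied to a basis completion of \<open>v\<close> keeps \<open>v\<close> as its first vector.\<close>
lemma orthonormal_mat_with_first_col:
  fixes v :: "real Matrix.vec"
  assumes v: "v \<in> carrier_vec n" "v \<noteq> 0\<^sub>v n"
  shows "\<exists>W c. orthonormal_mat n W \<and> col W 0 = c \<cdot>\<^sub>v v"
proof -
  have n: "n \<noteq> 0" using v by (auto intro!: eq_vecI)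
  interpret cof_vec_space n "TYPE(real)" .
  define b where "b = basis_completion v"
  define ws where "ws = gram_schmidt n b"
  from basis_completion[OF v, folded b_def]
  have b: "distinct b" "\<not> lin_dep (set b)" "set b \<subseteq> carrier_vec n" "hd b = v" "length b = n"
    by auto
  then obtain vs where bv: "b = v # vs" using n by (cases b) auto
  from gram_schmidt_result[OF b(3,1,2) refl, folded ws_def]
  have ws: "set ws \<subseteq> carrier_vec n" "corthogonal ws" "length ws = n" by (auto simp: b(5))
  have ws0: "ws ! 0 = v"
    using gram_schmidt_hd[OF v(1), of vs] ws(3) n unfolding ws_def bv[symmetric]
    by (metis hd_conv_nth list.size(3))
  have wsc: "ws ! i \<in> carrier_vec n" if "i < n" for i using ws that by auto
  have orth: "ws ! i \<bullet> ws ! j = 0 \<longleftrightarrow> i \<noteq> j" if "i < n" "j < n" for i j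
    using ws(2,3) that unfolding corthogonal_def by auto
  have pos: "ws ! i \<bullet> ws ! i > 0" if i: "i < n" for i
  proof -
    have "ws ! i \<bullet> ws ! i \<ge> 0"
      using wsc[OF i] by (metis conjugate_square_ge_0_vec vec_conjugate_real)
    then show ?thesis using orth[OF i i] by auto
  qed
  define us where "us = map (\<lambda>w. (1 / sqrt (w \<bullet> w)) \<cdot>\<^sub>v w) ws"
  have "orthonormal_mat n (mat_of_cols n us)"
  proof (rule orthonormal_mat_of_cols)
    show "set us \<subseteq> carrier_vec n" "length us = n" using ws unfolding us_def by auto
    fix i j assume i: "i < n" and j: "j < n"
    have "us ! i \<bullet> us ! j
        = (1 / sqrt (ws ! i \<bullet> ws ! i)) * (1 / sqrt (ws ! j \<bullet> ws ! j)) * (ws ! i \<bullet> ws ! j)"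
      unfolding us_def using i j ws(3) wsc[OF i] wsc[OF j] by simp
    then show "us ! i \<bullet> us ! j = (if i = j then 1 else 0)"
      using orth[OF i j] pos[OF i] by (auto simp: real_sqrt_mult[symmetric])
  qed
  moreover have "col (mat_of_cols n us) 0 = (1 / sqrt (v \<bullet> v)) \<cdot>\<^sub>v v"
    using n ws(3) ws0 wsc[of 0] unfolding us_def by (simp add: col_mat_of_cols)
  ultimately show ?thesis by blast
qed

text \<open>For a Hermitian matrix, \<open>z\<^sup>* C z\<close> is real and equals \<open>l |z|\<^sup>2\<close>.\<close>
lemma real_symmetric_eigenvalue_real:
  fixes A :: "real mat"
  assumes A: "A \<in> carrier_mat n n" "transpose_mat A = A"
    and ev: "eigenvalue (map_mat complex_of_real A) l"
  shows "l = complex_of_real (Re l)"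
proof -
  define C where "C = map_mat complex_of_real A"
  have C: "C \<in> carrier_mat n n" using A unfolding C_def by auto
  have Csym: "C $$ (i, j) = C $$ (j, i)" "cnj (C $$ (i, j)) = C $$ (i, j)"
    if "i < n" "j < n" for i j
    using A that unfolding C_def by (metis carrier_matD index_map_mat index_transpose_mat, auto)
  obtain z where z: "z \<in> carrier_vec n" "z \<noteq> 0\<^sub>v n" "C *\<^sub>v z = l \<cdot>\<^sub>v z"
    using ev C unfolding eigenvalue_def eigenvector_def C_def by auto
  define S where "S = (\<Sum>i<n. \<Sum>j<n. cnj (z $ i) * C $$ (i, j) * z $ j)"
  define r where "r = (\<Sum>i<n. (cmod (z $ i))\<^sup>2)"
  have row: "(\<Sum>j<n. C $$ (i, j) * z $ j) = l * z $ i" if i: "i < n" for i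
  proof -
    have "(C *\<^sub>v z) $ i = (\<Sum>j<n. C $$ (i, j) * z $ j)"
      using C z(1) i by (auto simp: scalar_prod_def lessThan_atLeast0)
    then show ?thesis using z(3) z(1) i by simp
  qed
  have "S = (\<Sum>i<n. cnj (z $ i) * (\<Sum>j<n. C $$ (i, j) * z $ j))"
    unfolding S_def by (simp add: sum_distrib_left mult.assoc)
  also have "\<dots> = l * (\<Sum>i<n. cnj (z $ i) * z $ i)"
    using row by (simp add: sum_distrib_left algebra_simps)
  also have "(\<Sum>i<n. cnj (z $ i) * z $ i) = complex_of_real r"
    unfolding r_def of_real_sum by (intro sum.cong refl) (metis complex_norm_square mult.commute)
  finally have S: "S = l * complex_of_real r" .
  have "cnj S = (\<Sum>i<n. \<Sum>j<n. z $ i * C $$ (i, j) * cnj (z $ j))"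
    unfolding S_def cnj_sum by (intro sum.cong refl) (simp add: Csym)
  also have "\<dots> = (\<Sum>j<n. \<Sum>i<n. z $ i * C $$ (i, j) * cnj (z $ j))" by (rule sum.swap)
  also have "\<dots> = S"
    unfolding S_def by (intro sum.cong refl) (simp add: Csym mult.commute mult.left_commute)
  finally have "cnj S = S" .
  obtain i0 where i0: "i0 < n" "z $ i0 \<noteq> 0"
    using z(1,2) by (metis eq_vecI carrier_vecD index_zero_vec)
  have "(cmod (z $ i0))\<^sup>2 \<le> r" unfolding r_def using i0 by (intro member_le_sum) auto
  then have "r \<noteq> 0" using i0 by (smt (verit) zero_less_power2 norm_eq_zero)
  then have "cnj l = l" using \<open>cnj S = S\<close> S by (simp add: complex_cnj_mult)
  then show ?thesis by (metis Reals_cnj_iff complex_is_Real_iff of_real_Re)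
qed

lemma real_symmetric_eigenvector:
  fixes A :: "real mat"
  assumes A: "A \<in> carrier_mat n n" "transpose_mat A = A" and n: "n > 0"
  shows "\<exists>e v. v \<in> carrier_vec n \<and> v \<noteq> 0\<^sub>v n \<and> A *\<^sub>v v = e \<cdot>\<^sub>v v"
proof -
  have C: "map_mat complex_of_real A \<in> carrier_mat n n" using A by auto
  obtain l where "l \<in> spectrum (map_mat complex_of_real A)" using spectrum_non_empty[OF C n] by auto
  then have l: "eigenvalue (map_mat complex_of_real A) l" unfolding spectrum_def by auto
  have "poly (char_poly (map_mat complex_of_real A)) l = 0"
    using l eigenvalue_root_char_poly[OF C] by auto
  then have "poly (char_poly A) (Re l) = 0"
    unfolding of_real_hom.char_poly_hom[OF A(1)]
    by (subst (asm) real_symmetric_eigenvalue_real[OF A l]) simp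
  then have "eigenvalue A (Re l)" using eigenvalue_root_char_poly[OF A(1)] by auto
  then show ?thesis using A unfolding eigenvalue_def eigenvector_def by auto
qed

lemma orthonormal_mat_block_diag:
  assumes V: "orthonormal_mat m V"
  shows "orthonormal_mat (Suc m) (four_block_mat (1\<^sub>m 1) (0\<^sub>m 1 m) (0\<^sub>m m 1) V)"
proof -
  note V' = orthonormal_matD[OF V]
  have "transpose_mat (four_block_mat (1\<^sub>m 1) (0\<^sub>m 1 m) (0\<^sub>m m 1) V) =
      four_block_mat (1\<^sub>m 1) (0\<^sub>m 1 m) (0\<^sub>m m 1) (transpose_mat V)"
    using V' by (subst transpose_four_block_mat) auto
  moreover have "four_block_mat (1\<^sub>m 1) (0\<^sub>m 1 m) (0\<^sub>m m 1) V \<in> carrier_mat (Suc m) (Suc m)"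
    using four_block_carrier_mat[OF one_carrier_mat[of 1] V'(1)] by simp
  ultimately show ?thesis
    unfolding orthonormal_mat_def using V'
    by (simp add: mult_four_block_mat[of _ 1 1 _ m _ m _ _ 1 _ m] four_block_one_mat[of 1 m, simplified])
qed

lemma block_diag_similar:
  fixes V E B :: "real mat"
  assumes V: "V \<in> carrier_mat m m" and E: "E \<in> carrier_mat 1 1" and B: "B \<in> carrier_mat m m"
  shows "four_block_mat (1\<^sub>m 1) (0\<^sub>m 1 m) (0\<^sub>m m 1) V * four_block_mat E (0\<^sub>m 1 m) (0\<^sub>m m 1) B
      * transpose_mat (four_block_mat (1\<^sub>m 1) (0\<^sub>m 1 m) (0\<^sub>m m 1) V)
    = four_block_mat E (0\<^sub>m 1 m) (0\<^sub>m m 1) (V * B * transpose_mat V)"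
  using V E B
  by (subst transpose_four_block_mat)
    (auto simp: mult_four_block_mat[of _ 1 1 _ m _ m _ _ 1 _ m] left_mult_one_mat[OF E]
      right_mult_one_mat[OF E])

lemma real_symmetric_deflation:
  fixes A :: "real mat"
  assumes A: "A \<in> carrier_mat (Suc m) (Suc m)" "transpose_mat A = A"
    and W: "orthonormal_mat (Suc m) W" and ev: "A *\<^sub>v col W 0 = e \<cdot>\<^sub>v col W 0"
  obtains A' where "A' \<in> carrier_mat m m" "transpose_mat A' = A'"
    "transpose_mat W * A * W = four_block_mat (Matrix.mat 1 1 (\<lambda>_. e)) (0\<^sub>m 1 m) (0\<^sub>m m 1) A'"
proof -
  note W' = orthonormal_matD[OF W]
  define B where "B = transpose_mat W * A * W"
  have B: "B \<in> carrier_mat (Suc m) (Suc m)" unfolding B_def using W' A by auto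
  have AW: "A * W \<in> carrier_mat (Suc m) (Suc m)" using W' A by auto
  have "transpose_mat B = transpose_mat (transpose_mat W * (A * W))"
    unfolding B_def using W' A by (metis assoc_mult_mat)
  also have "\<dots> = transpose_mat W * transpose_mat A * W"
    by (simp add: transpose_mult[OF W'(2) AW] transpose_mult[OF A(1) W'(1)])
  finally have Bsym: "transpose_mat B = B" unfolding B_def A(2) .
  have Bcol: "B $$ (i, 0) = (if i = 0 then e else 0)" if i: "i < Suc m" for i
  proof -
    have "B $$ (i, 0) = col W i \<bullet> (A *\<^sub>v col W 0)"
      unfolding B_def using W' A i
      by (simp add: assoc_mult_mat[of _ "Suc m" "Suc m" _ "Suc m" _ "Suc m"] mult_mat_vec_def)
    also have "\<dots> = e * (col W i \<bullet> col W 0)"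
      unfolding ev using W' i by (intro scalar_prod_smult_right) auto
    finally show ?thesis using orthonormal_mat_col_inner[OF W i, of 0] by simp
  qed
  have Brow: "B $$ (0, j) = (if j = 0 then e else 0)" if j: "j < Suc m" for j
    using Bcol[OF j] B j by (metis Bsym carrier_matD index_transpose_mat zero_less_Suc)
  define A' where "A' = Matrix.mat m m (\<lambda>(i, j). B $$ (Suc i, Suc j))"
  show thesis
  proof
    show "A' \<in> carrier_mat m m" unfolding A'_def by simp
    show "transpose_mat A' = A'"
      unfolding A'_def using B by (auto intro!: eq_matI) (metis Bsym Suc_less_eq carrier_matD index_transpose_mat)
    show "transpose_mat W * A * W = four_block_mat (Matrix.mat 1 1 (\<lambda>_. e)) (0\<^sub>m 1 m) (0\<^sub>m m 1) A'"
      unfolding B_def[symmetric] using B Bcol Brow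
      by (auto intro!: eq_matI simp: A'_def four_block_mat_def)
  qed
qed

theorem real_symmetric_spectral_decomposition:
  fixes A :: "real mat"
  assumes "A \<in> carrier_mat n n" and "transpose_mat A = A"
  shows "\<exists>U lam. orthonormal_mat n U \<and> A = U * mat_diag n lam * transpose_mat U"
  using assms
proof (induction n arbitrary: A)
  case 0
  then show ?case
    by (intro exI[of _ "1\<^sub>m 0"] exI[of _ "\<lambda>_. 0"]) (auto intro!: eq_matI simp: orthonormal_mat_def)
next
  case (Suc m)
  obtain e v where v: "v \<in> carrier_vec (Suc m)" "v \<noteq> 0\<^sub>v (Suc m)" "A *\<^sub>v v = e \<cdot>\<^sub>v v"
    using real_symmetric_eigenvector[OF Suc.prems] by auto
  obtain W c where W: "orthonormal_mat (Suc m) W" and Wv: "col W 0 = c \<cdot>\<^sub>v v"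
    using orthonormal_mat_with_first_col[OF v(1,2)] by auto
  have "A *\<^sub>v col W 0 = e \<cdot>\<^sub>v col W 0"
    unfolding Wv using Suc.prems(1) v by (simp add: mult_mat_vec smult_smult_assoc mult.commute)
  then obtain A' where A': "A' \<in> carrier_mat m m" "transpose_mat A' = A'"
    and WAW: "transpose_mat W * A * W = four_block_mat (Matrix.mat 1 1 (\<lambda>_. e)) (0\<^sub>m 1 m) (0\<^sub>m m 1) A'"
    using real_symmetric_deflation[OF Suc.prems W] by blast
  obtain V lam' where V: "orthonormal_mat m V" and A'V: "A' = V * mat_diag m lam' * transpose_mat V"
    using Suc.IH[OF A'] by auto
  define P where "P = four_block_mat (1\<^sub>m 1) (0\<^sub>m 1 m) (0\<^sub>m m 1) V"
  define lam where "lam i = (if i = 0 then e else lam' (i - 1))" for i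
  note W' = orthonormal_matD[OF W] and V' = orthonormal_matD[OF V]
  have P: "orthonormal_mat (Suc m) P" unfolding P_def by (rule orthonormal_mat_block_diag[OF V])
  note P' = orthonormal_matD[OF P]
  have diag: "mat_diag (Suc m) lam = four_block_mat (Matrix.mat 1 1 (\<lambda>_. e)) (0\<^sub>m 1 m) (0\<^sub>m m 1) (mat_diag m lam')"
    by (rule eq_matI) (auto simp: lam_def mat_diag_def)
  have PDP: "P * mat_diag (Suc m) lam * transpose_mat P = transpose_mat W * A * W"
    unfolding P_def WAW A'V diag by (intro block_diag_similar) (use V' in auto)
  have carr: "W \<in> carrier_mat (Suc m) (Suc m)" "transpose_mat W \<in> carrier_mat (Suc m) (Suc m)"
    "P \<in> carrier_mat (Suc m) (Suc m)" "transpose_mat P \<in> carrier_mat (Suc m) (Suc m)"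
    "A \<in> carrier_mat (Suc m) (Suc m)"
    using W' P' Suc.prems(1) by auto
  have "W * P * mat_diag (Suc m) lam * transpose_mat (W * P)
      = W * (P * mat_diag (Suc m) lam * transpose_mat P) * transpose_mat W"
    using carr
    by (simp add: transpose_mult assoc_mult_mat[of _ "Suc m" "Suc m" _ "Suc m" _ "Suc m"]
      mult_carrier_mat[of _ "Suc m" "Suc m" _ "Suc m"])
  also have "\<dots> = (W * transpose_mat W) * A * (W * transpose_mat W)"
    unfolding PDP using carr by (simp add: assoc_mult_mat[of _ "Suc m" "Suc m" _ "Suc m" _ "Suc m"])
  also have "\<dots> = A" using W' Suc.prems(1) by simp
  finally show ?case using orthonormal_mat_mult[OF W P] by metis
qed

definition spectral_mat :: "nat \<Rightarrow> real mat \<Rightarrow> (nat \<Rightarrow> real) \<Rightarrow> real mat" where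
  "spectral_mat n U f = U * mat_diag n f * transpose_mat U"

lemma spectral_mat_carrier [simp]: "U \<in> carrier_mat n n \<Longrightarrow> spectral_mat n U f \<in> carrier_mat n n"
  unfolding spectral_mat_def by auto

lemma dim_spectral_mat [simp]:
  "dim_row (spectral_mat n U f) = dim_row U" "dim_col (spectral_mat n U f) = dim_row U"
  unfolding spectral_mat_def by simp_all

lemma spectral_mat_cong:
  assumes "\<And>i. i < n \<Longrightarrow> f i = g i"
  shows "spectral_mat n U f = spectral_mat n U g"
proof -
  have "mat_diag n f = mat_diag n g" using assms by (auto intro!: eq_matI simp: mat_diag_def)
  then show ?thesis unfolding spectral_mat_def by simp
qed

lemma spectral_mat_linear:
  assumes U: "U \<in> carrier_mat n n"
  shows spectral_mat_add: "spectral_mat n U f + spectral_mat n U g = spectral_mat n U (\<lambda>i. f i + g i)"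
    and spectral_mat_diff: "spectral_mat n U f - spectral_mat n U g = spectral_mat n U (\<lambda>i. f i - g i)"
    and spectral_mat_smult: "c \<cdot>\<^sub>m spectral_mat n U f = spectral_mat n U (\<lambda>i. c * f i)"
proof -
  have UT: "transpose_mat U \<in> carrier_mat n n" using U by auto
  have "mat_diag n f + mat_diag n g = mat_diag n (\<lambda>i. f i + g i)"
    "mat_diag n f - mat_diag n g = mat_diag n (\<lambda>i. f i - g i)"
    "c \<cdot>\<^sub>m mat_diag n f = mat_diag n (\<lambda>i. c * f i)"
    by (auto intro!: eq_matI simp: mat_diag_def)
  note diag = this[symmetric]
  have UD: "U * mat_diag n h \<in> carrier_mat n n" for h using U by simp
  show "spectral_mat n U f + spectral_mat n U g = spectral_mat n U (\<lambda>i. f i + g i)"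
    unfolding spectral_mat_def diag(1) using U UT UD
    by (simp add: mult_add_distrib_mat[OF U, where nc = n] add_mult_distrib_mat[of _ n n _ _ n])
  show "spectral_mat n U f - spectral_mat n U g = spectral_mat n U (\<lambda>i. f i - g i)"
    unfolding spectral_mat_def diag(2) using U UT UD
    by (simp add: mult_minus_distrib_mat[OF U, where nc = n] minus_mult_distrib_mat[of _ n n _ _ n])
  show "c \<cdot>\<^sub>m spectral_mat n U f = spectral_mat n U (\<lambda>i. c * f i)"
    unfolding spectral_mat_def diag(3) using U UT UD
    by (simp add: mult_smult_distrib[OF U, where nc = n] mult_smult_assoc_mat[of _ n n _ n])
qed

lemma spectral_mat_zero:
  assumes U: "U \<in> carrier_mat n n"
  shows "spectral_mat n U (\<lambda>_. 0) = 0\<^sub>m n n"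
proof -
  have "mat_diag n (\<lambda>_. 0) = (0\<^sub>m n n :: real mat)" by (auto intro!: eq_matI simp: mat_diag_def)
  then show ?thesis
    unfolding spectral_mat_def using U by (simp add: right_mult_zero_mat left_mult_zero_mat)
qed

lemma spectral_mat_mult:
  assumes U: "orthonormal_mat n U"
  shows "spectral_mat n U f * spectral_mat n U g = spectral_mat n U (\<lambda>i. f i * g i)"
proof -
  note U' = orthonormal_matD[OF U]
  have "spectral_mat n U f * spectral_mat n U g
      = U * mat_diag n f * (transpose_mat U * U) * mat_diag n g * transpose_mat U"
    unfolding spectral_mat_def using U'(1,2)
    by (simp add: assoc_mult_mat[of _ n n _ n _ n] mult_carrier_mat[of _ n n _ n])
  also have "\<dots> = U * (mat_diag n f * mat_diag n g) * transpose_mat U"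
    using U' by (simp add: assoc_mult_mat[of _ n n _ n _ n] mult_carrier_mat[of _ n n _ n]
        left_mult_one_mat[of _ n n])
  finally show ?thesis unfolding spectral_mat_def mat_diag_diag .
qed

lemma spectral_mat_one:
  assumes U: "orthonormal_mat n U"
  shows "spectral_mat n U (\<lambda>_. 1) = 1\<^sub>m n"
  unfolding spectral_mat_def using orthonormal_matD[OF U] by simp

lemma poly_mat_pCons:
  assumes M: "M \<in> carrier_mat n n"
  shows "poly_mat (pCons a p) M = a \<cdot>\<^sub>m 1\<^sub>m n + M * poly_mat p M"
proof (cases "a = 0 \<and> p = 0")
  case True
  then show ?thesis using M unfolding poly_mat_def by (auto intro!: eq_matI)
next
  case False
  then have "coeffs (pCons a p) = a # coeffs p" by (auto simp: coeffs_pCons_eq_cCons cCons_def)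
  then show ?thesis using M unfolding poly_mat_def by simp
qed

lemma poly_mat_spectral_mat:
  assumes U: "orthonormal_mat n U"
  shows "poly_mat q (spectral_mat n U f) = spectral_mat n U (\<lambda>i. poly q (f i))"
proof (induction q)
  case 0
  show ?case
    using orthonormal_matD[OF U] by (simp add: poly_mat_def Let_def spectral_mat_zero)
next
  case (pCons a p)
  have "poly_mat (pCons a p) (spectral_mat n U f)
      = a \<cdot>\<^sub>m spectral_mat n U (\<lambda>_. 1) + spectral_mat n U f * spectral_mat n U (\<lambda>i. poly p (f i))"
    using orthonormal_matD[OF U] by (simp add: poly_mat_pCons[of _ n] pCons.IH spectral_mat_one[OF U])
  also have "\<dots> = spectral_mat n U (\<lambda>i. poly (pCons a p) (f i))"
    using orthonormal_matD[OF U] by (simp add: spectral_mat_mult[OF U] spectral_mat_linear)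
  finally show ?case .
qed

lemma poly_interpolation_exists:
  fixes g :: "real \<Rightarrow> real"
  assumes "finite S"
  shows "\<exists>q. \<forall>x\<in>S. poly q x = g x"
  using assms
proof (induction S rule: finite_induct)
  case empty
  then show ?case by auto
next
  case (insert a S)
  then obtain q where q: "\<forall>x\<in>S. poly q x = g x" by auto
  define P where "P = (\<Prod>s\<in>S. [:-s, 1:])"
  have "\<forall>x\<in>S. poly P x = 0" "poly P a \<noteq> 0"
    unfolding P_def using insert(1,2) by (auto simp: poly_prod_0)
  then have "\<forall>x\<in>insert a S. poly (q + Polynomial.smult ((g a - poly q a) / poly P a) P) x = g x"
    using q by auto
  then show ?case by blast
qed

text \<open>\<open>mat_powr\<close> picks an arbitrary diagonalization, so well-definedness must be shown: on the finitely many
  eigenvalues of both diagonalizations, \<open>x powr p\<close> agrees with a polynomial, and polynomials of a matrix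
  do not depend on the diagonalization.\<close>
lemma mat_powr_spectral_mat:
  assumes U: "orthonormal_mat n U"
  shows "mat_powr (spectral_mat n U f) p = spectral_mat n U (\<lambda>i. f i powr p)"
proof -
  define Q where "Q R \<longleftrightarrow> (\<exists>U' lam. U' \<in> carrier_mat n n \<and> transpose_mat U' * U' = 1\<^sub>m n \<and>
        spectral_mat n U f = U' * mat_diag n lam * transpose_mat U' \<and>
        R = U' * mat_diag n (\<lambda>i. lam i powr p) * transpose_mat U')" for R
  have ex: "Q (spectral_mat n U (\<lambda>i. f i powr p))"
    unfolding Q_def spectral_mat_def using U unfolding orthonormal_mat_def by blast
  have unique: "R = spectral_mat n U (\<lambda>i. f i powr p)" if "Q R" for R
  proof -
    from that obtain U' lam where U': "orthonormal_mat n U'"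
      and eq: "spectral_mat n U f = spectral_mat n U' lam" and R: "R = spectral_mat n U' (\<lambda>i. lam i powr p)"
      unfolding Q_def spectral_mat_def orthonormal_mat_def by auto
    obtain q where q: "\<forall>x\<in>f ` {..<n} \<union> lam ` {..<n}. poly q x = x powr p"
      using poly_interpolation_exists[of "f ` {..<n} \<union> lam ` {..<n}" "\<lambda>x. x powr p"] by auto
    have "spectral_mat n U (\<lambda>i. f i powr p) = spectral_mat n U (\<lambda>i. poly q (f i))"
      using q by (intro spectral_mat_cong) auto
    also have "\<dots> = poly_mat q (spectral_mat n U' lam)"
      using poly_mat_spectral_mat[OF U, of q f] eq by simp
    also have "\<dots> = R"
      unfolding poly_mat_spectral_mat[OF U'] R using q by (intro spectral_mat_cong) auto
    finally show ?thesis by simp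
  qed
  have "dim_row (spectral_mat n U f) = n" using orthonormal_matD[OF U] by simp
  then have "mat_powr (spectral_mat n U f) p = (SOME R. Q R)" unfolding mat_powr_def Let_def Q_def by simp
  also have "\<dots> = spectral_mat n U (\<lambda>i. f i powr p)" using someI[of Q, OF ex] unique by blast
  finally show ?thesis .
qed

lemma loewner_ge_spectral_mat:
  assumes U: "orthonormal_mat n U" and le: "\<And>i. i < n \<Longrightarrow> g i \<le> f i"
  shows "loewner_ge (spectral_mat n U f) (spectral_mat n U g)"
  unfolding loewner_ge_def
proof
  note U' = orthonormal_matD[OF U]
  fix v :: "real Matrix.vec" assume "v \<in> carrier_vec (dim_row (spectral_mat n U f))"
  then have v: "v \<in> carrier_vec n" using U' by auto
  define w where "w = transpose_mat U *\<^sub>v v"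
  define d where "d i = f i - g i" for i
  have w: "w \<in> carrier_vec n" unfolding w_def using U' v by auto
  have "v \<bullet> ((spectral_mat n U f - spectral_mat n U g) *\<^sub>v v) = v \<bullet> (spectral_mat n U d *\<^sub>v v)"
    unfolding spectral_mat_diff[OF U'(1)] d_def ..
  also have "spectral_mat n U d *\<^sub>v v = U *\<^sub>v (mat_diag n d *\<^sub>v w)"
    unfolding spectral_mat_def w_def using U' v
    by (simp add: assoc_mult_mat_vec[of _ n n _ n])
  also have "v \<bullet> (U *\<^sub>v (mat_diag n d *\<^sub>v w)) = w \<bullet> (mat_diag n d *\<^sub>v w)"
    using transpose_vec_mult_scalar[OF U'(1) mult_mat_vec_carrier[OF mat_diag_dim w] v]
    unfolding w_def[symmetric] by simp
  also have "\<dots> = (\<Sum>i<n. d i * (w $ i)\<^sup>2)"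
  proof -
    have if_times: "(if P then a else 0) * b = (if P then a * b else (0::real))" for P a b by simp
    show ?thesis
      using w by (auto simp: scalar_prod_def mat_diag_def lessThan_atLeast0 power2_eq_square if_times
          intro!: sum.cong)
  qed
  also have "\<dots> \<ge> 0" using le unfolding d_def by (intro sum_nonneg) auto
  finally show "0 \<le> v \<bullet> ((spectral_mat n U f - spectral_mat n U g) *\<^sub>v v)" .
qed

lemma loewner_approx_spectral_mat:
  assumes U: "orthonormal_mat n U"
    and bounds: "\<And>i. i < n \<Longrightarrow> exp (- \<epsilon>) * f i \<le> g i \<and> g i \<le> exp \<epsilon> * f i"
  shows "loewner_approx \<epsilon> (spectral_mat n U f) (spectral_mat n U g)"
  unfolding loewner_approx_def spectral_mat_smult[OF orthonormal_mat_carrier[OF U]]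
  using bounds by (auto intro!: loewner_ge_spectral_mat[OF U])

lemma spectral_mat_col:
  assumes U: "orthonormal_mat n U" and i: "i < n"
  shows "spectral_mat n U f *\<^sub>v col U i = f i \<cdot>\<^sub>v col U i"
proof -
  note U' = orthonormal_matD[OF U]
  have "spectral_mat n U f * U = U * mat_diag n f"
    unfolding spectral_mat_def using U'
    by (simp add: assoc_mult_mat[of _ n n _ n _ n] mult_carrier_mat[of _ n n _ n]
        right_mult_one_mat[of "mat_diag n f" n n])
  then have "spectral_mat n U f *\<^sub>v col U i = col (U * mat_diag n f) i"
    using U' i by (metis col_mult2 spectral_mat_carrier)
  also have "\<dots> = f i \<cdot>\<^sub>v col U i"
    unfolding mat_diag_mult_right[OF U'(1)] using U' i by (intro eq_vecI) auto
  finally show ?thesis .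
qed

lemma real_eigenvalue_le_spectral_radius:
  fixes X :: "real mat"
  assumes X: "X \<in> carrier_mat n n" and v: "v \<in> carrier_vec n" "v \<noteq> 0\<^sub>v n" "X *\<^sub>v v = e \<cdot>\<^sub>v v"
  shows "\<bar>e\<bar> \<le> spectral_radius (map_mat complex_of_real X)"
proof -
  have C: "map_mat complex_of_real X \<in> carrier_mat n n" using X by auto
  have n: "n > 0"
  proof (rule ccontr)
    assume "\<not> n > 0"
    then have "v = 0\<^sub>v n" using v(1) by (intro eq_vecI) auto
    then show False using v(2) by simp
  qed
  have "eigenvalue X e" unfolding eigenvalue_def eigenvector_def using X v by auto
  then have "poly (char_poly X) e = 0" using eigenvalue_root_char_poly[OF X] by auto
  then have "poly (char_poly (map_mat complex_of_real X)) (complex_of_real e) = 0"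
    unfolding of_real_hom.char_poly_hom[OF X] by simp
  then have "complex_of_real e \<in> spectrum (map_mat complex_of_real X)"
    using eigenvalue_root_char_poly[OF C] unfolding spectrum_def by auto
  from spectral_radius_mem_max(2)[OF C n] this show ?thesis by force
qed

lemma gbinomial_abs_le_one:
  fixes a :: real
  assumes "\<bar>a\<bar> \<le> 1"
  shows "\<bar>a gchoose k\<bar> \<le> 1"
proof (induction k)
  case 0
  then show ?case by simp
next
  case (Suc k)
  have "\<bar>a - of_nat k\<bar> \<le> of_nat (Suc k)" using assms by auto
  then have "\<bar>(a - of_nat k) * (a gchoose k)\<bar> \<le> of_nat (Suc k)"
    using Suc.IH by (simp add: abs_mult mult_le_one mult_mono' order_trans[OF mult_right_le_one_le])
  moreover have "a gchoose Suc k = (a - of_nat k) * (a gchoose k) / of_nat (Suc k)"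
    using gbinomial_mult_1[of a k] by (simp add: field_simps)
  ultimately show ?case by (simp add: abs_div)
qed

lemma gen_binomial_real_tail_bound:
  fixes a z :: real
  assumes a: "\<bar>a\<bar> \<le> 1" and z: "\<bar>z\<bar> \<le> 1/2"
  shows "\<bar>(1 + z) powr a - (\<Sum>k<N. (a gchoose k) * z ^ k)\<bar> \<le> 2 * (1/2) ^ N"
proof -
  define f where "f k = (a gchoose k) * z ^ k" for k
  have tail: "(\<lambda>k. f (k + N)) sums ((1 + z) powr a - (\<Sum>k<N. f k))"
    using sums_split_initial_segment[OF gen_binomial_real[of z a], of N] z unfolding f_def by simp
  have geom: "(\<lambda>k. (1/2) ^ N * (1/2) ^ k) sums ((1/2::real) ^ N * 2)"
    using sums_mult[OF geometric_sums[of "1/2::real"], of "(1/2)^N"] by simp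
  have f_le: "\<bar>f k\<bar> \<le> (1/2) ^ k" for k
  proof -
    have "\<bar>f k\<bar> = \<bar>a gchoose k\<bar> * \<bar>z\<bar> ^ k" unfolding f_def by (simp add: abs_mult power_abs)
    also have "\<dots> \<le> 1 * (1/2) ^ k"
      using gbinomial_abs_le_one[OF a, of k] z by (intro mult_mono power_mono) auto
    finally show ?thesis by simp
  qed
  have "\<bar>f (k + N)\<bar> \<le> (1/2) ^ N * (1/2) ^ k" for k
    using f_le[of "k + N"] by (simp add: power_add mult.commute)
  then have "(1 + z) powr a - (\<Sum>k<N. f k) \<le> (1/2) ^ N * 2"
    and "- ((1 + z) powr a - (\<Sum>k<N. f k)) \<le> (1/2) ^ N * 2"
    by (intro sums_le[OF _ tail geom] sums_le[OF _ sums_minus[OF tail] geom]; simp add: abs_le_iff)+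
  then show ?thesis unfolding f_def by (simp add: abs_le_iff mult.commute)
qed

definition binomial_taylor_poly :: "real \<Rightarrow> nat \<Rightarrow> real poly" where
  "binomial_taylor_poly a N = (\<Sum>k<N. Polynomial.smult (a gchoose k) ([:-1, 1:] ^ k))"

lemma poly_binomial_taylor_poly:
  "poly (binomial_taylor_poly a N) y = (\<Sum>k<N. (a gchoose k) * (y - 1) ^ k)"
  unfolding binomial_taylor_poly_def by (simp add: poly_sum)

lemma degree_binomial_taylor_poly: "degree (binomial_taylor_poly a N) \<le> N"
  unfolding binomial_taylor_poly_def
proof (rule degree_sum_le)
  fix k assume "k \<in> {..<N}"
  have "degree (Polynomial.smult (a gchoose k) ([:-1, 1:] ^ k)) \<le> degree (([:-1, 1:] :: real poly) ^ k)"
    by (rule degree_smult_le)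
  also have "\<dots> \<le> degree ([:-1, 1:] :: real poly) * k" by (rule degree_power_le)
  also have "\<dots> \<le> N" using \<open>k \<in> {..<N}\<close> by simp
  finally show "degree (Polynomial.smult (a gchoose k) ([:-1, 1:] ^ k)) \<le> N" .
qed simp

lemma power2_exp_bounds:
  fixes r e :: real
  assumes e: "0 < e" "e \<le> 1" and r: "\<bar>r - 1\<bar> \<le> e / 4"
  shows "exp (- e) \<le> r\<^sup>2" and "r\<^sup>2 \<le> exp e"
proof -
  define s where "s = \<bar>r - 1\<bar>"
  have s: "0 \<le> s" "s \<le> e / 4" "s * s \<le> s" using r e mult_right_le_one_le[of s s] unfolding s_def by auto
  have "r\<^sup>2 \<le> (1 + s)\<^sup>2"
    using power_mono[of "\<bar>r\<bar>" "1 + s" 2] unfolding s_def by simp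
  also have "\<dots> \<le> 1 + e" using s by (simp add: power2_eq_square algebra_simps)
  also have "\<dots> \<le> exp e" by (rule exp_ge_add_one_self)
  finally show "r\<^sup>2 \<le> exp e" .
  have "exp (- e) \<le> 1 / (1 + e)"
    using e exp_ge_add_one_self[of e] by (simp add: exp_minus divide_simps)
  also have "\<dots> \<le> 1 - e / 2"
    using e mult_right_le_one_le[of e e] by (simp add: divide_simps algebra_simps)
  also have "\<dots> \<le> 1 - 2 * s" using s by simp
  also have "\<dots> \<le> (1 - s)\<^sup>2" by (simp add: power2_eq_square algebra_simps)
  also have "\<dots> \<le> \<bar>r\<bar>\<^sup>2"
    using s e unfolding s_def by (intro power_mono) auto
  also have "\<dots> = r\<^sup>2" by simp
  finally show "exp (- e) \<le> r\<^sup>2" .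
qed

text \<open>Since \<open>y powr (-p/2) \<ge> 1/2\<close>, an absolute error \<open>e/8\<close> is a relative error \<open>e/4\<close>.\<close>
lemma binomial_taylor_poly_inverse_root_bounds:
  fixes p y e :: real
  assumes p: "\<bar>p\<bar> \<le> 1" and y: "\<bar>y - 1\<bar> < 1/2" and e: "0 < e" "e \<le> 1"
    and N: "2 * (1/2) ^ N \<le> e / 8"
  defines "t \<equiv> poly (binomial_taylor_poly (- p / 2) N) y"
  shows "exp (- e) \<le> t\<^sup>2 * y powr p" and "t\<^sup>2 * y powr p \<le> exp e"
proof -
  define a where "a = - p / 2"
  define g where "g = y powr a"
  have yb: "1/2 < y" "y < 3/2" using y abs_less_iff[of "y - 1" "1/2"] by linarith+
  have a: "\<bar>a\<bar> \<le> 1" using p unfolding a_def by simp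
  have "ln y \<le> ln 2" "- ln 2 \<le> ln y"
    using yb ln_le_cancel_iff[of "1/2" y] by (simp_all add: ln_div)
  then have "\<bar>a\<bar> * \<bar>ln y\<bar> \<le> 1 * ln 2" using a by (intro mult_mono) auto
  then have "\<bar>a * ln y\<bar> \<le> ln 2" by (simp add: abs_mult)
  then have "- ln 2 \<le> a * ln y" by linarith
  then have g: "g \<ge> 1/2"
    using exp_le_cancel_iff[of "- ln 2" "a * ln y"] yb unfolding g_def powr_def by (simp add: exp_minus)
  have "\<bar>g - t\<bar> \<le> e / 8"
    using gen_binomial_real_tail_bound[OF a, of "y - 1" N] y N
    unfolding t_def poly_binomial_taylor_poly g_def a_def by simp
  then have "\<bar>g - t\<bar> / g \<le> (e / 8) / (1/2)" using g e by (intro frac_le) auto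
  moreover have "\<bar>t / g - 1\<bar> = \<bar>g - t\<bar> / g" using g by (simp add: field_simps abs_div)
  ultimately have r: "\<bar>t / g - 1\<bar> \<le> e / 4" by simp
  have "g\<^sup>2 * y powr p = y powr (a + a + p)"
    unfolding g_def power2_eq_square by (simp only: powr_add)
  also have "\<dots> = 1" using yb unfolding a_def by simp
  finally have gg: "g\<^sup>2 * y powr p = 1" .
  have "t\<^sup>2 * y powr p = (t / g)\<^sup>2 * (g\<^sup>2 * y powr p)" using g by (simp add: power_divide)
  then have "t\<^sup>2 * y powr p = (t / g)\<^sup>2" unfolding gg by simp
  then show "exp (- e) \<le> t\<^sup>2 * y powr p" and "t\<^sup>2 * y powr p \<le> exp e"
    using power2_exp_bounds[OF e r] by simp_all
qed

lemma truncation_length_exists: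
  fixes \<epsilon> :: real
  assumes "\<epsilon> > 0"
  shows "\<exists>N. 2 * (1/2) ^ N \<le> min \<epsilon> 1 / 8 \<and> real N \<le> 8 * max 1 (ln (1 / \<epsilon>))"
proof -
  define e where "e = min \<epsilon> 1"
  define c where "c = nat \<lceil>ln (1 / e)\<rceil>"
  have e: "0 < e" "e \<le> 1" unfolding e_def using assms by auto
  have ln: "0 \<le> ln (1 / e)" using e by simp
  have ln_le: "ln (1 / e) \<le> max 1 (ln (1 / \<epsilon>))"
  proof (cases "\<epsilon> \<le> 1")
    case True
    then show ?thesis unfolding e_def by simp
  next
    case False
    then show ?thesis unfolding e_def by simp
  qed
  have "1 / e = exp (ln (1 / e))" using e by simp
  also have "\<dots> \<le> exp (real c)" unfolding c_def by (simp add: real_nat_ceiling_ge)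
  also have "\<dots> = exp 1 ^ c" by (simp add: exp_of_nat_mult[symmetric])
  also have "\<dots> \<le> 4 ^ c" using exp_le by (intro power_mono) auto
  finally have "1 \<le> e * 4 ^ c" using e by (simp add: divide_le_eq mult.commute)
  have "2 * (1/2::real) ^ (4 + 2 * c) = 1 / (8 * 4 ^ c)"
    by (simp add: power_add power_mult power_one_over)
  also have "\<dots> \<le> e / 8" using \<open>1 \<le> e * 4 ^ c\<close> by (simp add: divide_simps)
  finally have "2 * (1/2) ^ (4 + 2 * c) \<le> e / 8" .
  moreover have "real (4 + 2 * c) \<le> 8 * max 1 (ln (1 / \<epsilon>))"
    using ln ln_le unfolding c_def by linarith
  ultimately show ?thesis unfolding e_def by blast
qed

lemma inverse_root_poly_exists:
  fixes p \<epsilon> :: real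
  assumes \<epsilon>: "\<epsilon> > 0" and p: "\<bar>p\<bar> \<le> 1"
  shows "\<exists>T. real (degree T) \<le> 8 * max 1 (ln (1 / \<epsilon>)) \<and>
    (\<forall>y. \<bar>y - 1\<bar> < 1/2 \<longrightarrow> exp (- \<epsilon>) \<le> (poly T y)\<^sup>2 * y powr p \<and> (poly T y)\<^sup>2 * y powr p \<le> exp \<epsilon>)"
proof -
  obtain N where N: "2 * (1/2) ^ N \<le> min \<epsilon> 1 / 8" and deg: "real N \<le> 8 * max 1 (ln (1 / \<epsilon>))"
    using truncation_length_exists[OF \<epsilon>] by blast
  have e: "0 < min \<epsilon> 1" "min \<epsilon> 1 \<le> 1" "exp (- \<epsilon>) \<le> exp (- min \<epsilon> 1)" "exp (min \<epsilon> 1) \<le> exp \<epsilon>"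
    using \<epsilon> by auto
  show ?thesis
  proof (intro exI[of _ "binomial_taylor_poly (- p / 2) N"] conjI allI impI)
    show "real (degree (binomial_taylor_poly (- p / 2) N)) \<le> 8 * max 1 (ln (1 / \<epsilon>))"
      using degree_binomial_taylor_poly[of "- p / 2" N] deg by linarith
    fix y :: real assume y: "\<bar>y - 1\<bar> < 1/2"
    show "exp (- \<epsilon>) \<le> (poly (binomial_taylor_poly (- p / 2) N) y)\<^sup>2 * y powr p"
      "(poly (binomial_taylor_poly (- p / 2) N) y)\<^sup>2 * y powr p \<le> exp \<epsilon>"
      using binomial_taylor_poly_inverse_root_bounds[OF p y e(1,2) N] e(3,4) by linarith+
  qed
qed

lemma sandwich_eigenvalue_bounds:
  fixes x p \<epsilon> t :: real
  assumes x: "\<bar>x\<bar> < 1"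
    and t: "exp (- \<epsilon>) \<le> t\<^sup>2 * (1 + 1/2 * x) powr p \<and> t\<^sup>2 * (1 + 1/2 * x) powr p \<le> exp \<epsilon>"
  shows "exp (- \<epsilon>) * (1 - x) powr p \<le> t * (1 - 1/2 * x - 1/2 * (x * x)) powr p * t \<and>
    t * (1 - 1/2 * x - 1/2 * (x * x)) powr p * t \<le> exp \<epsilon> * (1 - x) powr p"
proof -
  have "1 - 1/2 * x - 1/2 * (x * x) = (1 - x) * (1 + 1/2 * x)" by (simp add: field_simps)
  then have "t * (1 - 1/2 * x - 1/2 * (x * x)) powr p * t = (1 - x) powr p * (t\<^sup>2 * (1 + 1/2 * x) powr p)"
    using x by (simp add: powr_mult power2_eq_square)
  moreover have "(1 - x) powr p > 0" using x by simp
  ultimately show ?thesis using t by (simp add: mult.commute)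
qed

lemma sandwich_loewner_approx:
  fixes X :: "real mat" and p \<epsilon> :: real
  assumes X: "X \<in> carrier_mat n n" "transpose_mat X = X"
    and rho: "spectral_radius (map_mat complex_of_real X) < 1"
    and p: "-1 \<le> p" "p \<le> 1" and \<epsilon>: "\<epsilon> > 0"
  shows "\<exists>T. real (degree T) \<le> 8 * max 1 (ln (1 / \<epsilon>)) \<and>
    loewner_approx \<epsilon> (mat_powr (1\<^sub>m n - X) p)
      (poly_mat T (1\<^sub>m n + (1/2) \<cdot>\<^sub>m X) * mat_powr (1\<^sub>m n - (1/2) \<cdot>\<^sub>m X - (1/2) \<cdot>\<^sub>m (X * X)) p *
       poly_mat T (1\<^sub>m n + (1/2) \<cdot>\<^sub>m X))"
proof -
  obtain U lam where U: "orthonormal_mat n U" and XU: "X = spectral_mat n U lam"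
    using real_symmetric_spectral_decomposition[OF X] unfolding spectral_mat_def by blast
  have lam: "\<bar>lam i\<bar> < 1" if "i < n" for i
    using real_eigenvalue_le_spectral_radius[OF X(1) _ orthonormal_mat_col_nonzero[OF U that]]
      spectral_mat_col[OF U that] orthonormal_mat_carrier[OF U] that rho
    unfolding XU by fastforce
  obtain T where deg: "real (degree T) \<le> 8 * max 1 (ln (1 / \<epsilon>))"
    and T: "\<And>y. \<bar>y - 1\<bar> < 1/2 \<Longrightarrow> exp (- \<epsilon>) \<le> (poly T y)\<^sup>2 * y powr p \<and> (poly T y)\<^sup>2 * y powr p \<le> exp \<epsilon>"
    using inverse_root_poly_exists[OF \<epsilon>, of p] p by (auto simp: abs_le_iff)
  have bounds: "exp (- \<epsilon>) * (1 - lam i) powr p \<le> poly T (1 + 1/2 * lam i) *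
      (1 - 1/2 * lam i - 1/2 * (lam i * lam i)) powr p * poly T (1 + 1/2 * lam i) \<and>
    poly T (1 + 1/2 * lam i) * (1 - 1/2 * lam i - 1/2 * (lam i * lam i)) powr p * poly T (1 + 1/2 * lam i)
      \<le> exp \<epsilon> * (1 - lam i) powr p" if "i < n" for i
    using lam[OF that] by (intro sandwich_eigenvalue_bounds T) auto
  note calculus = spectral_mat_one[OF U, symmetric] spectral_mat_linear[OF orthonormal_mat_carrier[OF U]]
    spectral_mat_mult[OF U] poly_mat_spectral_mat[OF U] mat_powr_spectral_mat[OF U]
  have approx: "loewner_approx \<epsilon> (mat_powr (1\<^sub>m n - X) p)
      (poly_mat T (1\<^sub>m n + (1/2) \<cdot>\<^sub>m X) * mat_powr (1\<^sub>m n - (1/2) \<cdot>\<^sub>m X - (1/2) \<cdot>\<^sub>m (X * X)) p *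
       poly_mat T (1\<^sub>m n + (1/2) \<cdot>\<^sub>m X))"
    unfolding XU calculus by (rule loewner_approx_spectral_mat[OF U bounds])
  show ?thesis by (rule exI[of _ T], rule conjI[OF deg approx])
qed

theorem mainTheorem5:
  shows "\<exists>K::real. \<forall>(n::nat) (X::real mat) (p::real) (\<epsilon>::real).
    X \<in> carrier_mat n n \<and> transpose_mat X = X \<and>
    spectral_radius (map_mat complex_of_real X) < 1 \<and>
    -1 \<le> p \<and> p \<le> 1 \<and> \<epsilon> > 0 \<longrightarrow>
    (\<exists>T::real poly. real (degree T) \<le> K * max 1 (ln (1 / \<epsilon>)) \<and>
       loewner_approx \<epsilon> (mat_powr (1\<^sub>m n - X) p)
         (poly_mat T (1\<^sub>m n + (1/2) \<cdot>\<^sub>m X) *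
          mat_powr (1\<^sub>m n - (1/2) \<cdot>\<^sub>m X - (1/2) \<cdot>\<^sub>m (X * X)) p *
          poly_mat T (1\<^sub>m n + (1/2) \<cdot>\<^sub>m X)))"
  by (rule exI[of _ 8]) (simp add: sandwich_loewner_approx)

end
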